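(* Let $G$ be the undirected graph with vertex set $\{v_1,\dots,v_8\}$ and edge set $\{v_1v_5,\ v_1v_6,\ v_2v_5,\ v_2v_6,\ v_2v_7,\ v_2v_8,\ v_4v_7,\ v_4v_8\}$. Consider the problem of finding a population of size two of $4$-vertex covers of $G$ maximizing the Hamming distance between its two members. The sets $V_1=\{v_1,v_2,v_7,v_8\}$, $V_2=\{v_2,v_4,v_5,v_6\}$, $V_3=\{v_1,v_2,v_3,v_4\}$, $V_4=\{v_5,v_6,v_7,v_8\}$ are $4$-vertex covers of $G$, and $V_1$, $V_2$, $V_4$ are non-excessive. Moreover, the unique population of size two with the maximum Hamming distance, which equals $8$, is $(V_3,V_4)$. The population $(V_1,V_2)$ has Hamming distance $6$, and replacing either of its individuals with a different vertex cover of size $3$ or $4$ strictly reduces the Hamming distance between the two individuals; that is, this population is a local optimum.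
   Context: A vertex cover of $G=(V,E)$ is a set $C\subseteq V$ such that every edge has at least one endpoint in $C$; a $4$-vertex cover is a vertex cover of size at most $4$. A vertex cover $C$ is non-excessive if for every $v\in C$, $C\setminus\{v\}$ is not a vertex cover. Subsets of $V$ are identified with bit strings of length $|V|$ (the $i$-th bit indicates whether $v_i$ is included), and the Hamming distance between two sets is the Hamming distance between the corresponding bit strings, i.e. the size of their symmetric difference. A population of size two is a pair (multiset) of two covers. *)

theory Defs
  imports Main
begin

text \<open>Vertices v_1..v_8 are represented by the natural numbers 1..8.
  Undirected edges are given as pairs; orientation is irrelevant.\<close>

definition G_V :: "nat set" where "G_V = {1..8}"

definition G_E :: "(nat \<times> nat) set" where
  "G_E = {(1,5),(1,6),(2,5),(2,6),(2,7),(2,8),(4,7),(4,8)}"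

definition vertex_cover :: "'a set \<Rightarrow> ('a \<times> 'a) set \<Rightarrow> 'a set \<Rightarrow> bool" where
  "vertex_cover V E C \<longleftrightarrow> C \<subseteq> V \<and> (\<forall>(u,v)\<in>E. u \<in> C \<or> v \<in> C)"

definition k_vertex_cover :: "nat \<Rightarrow> 'a set \<Rightarrow> ('a \<times> 'a) set \<Rightarrow> 'a set \<Rightarrow> bool" where
  "k_vertex_cover k V E C \<longleftrightarrow> vertex_cover V E C \<and> card C \<le> k"

definition non_excessive :: "'a set \<Rightarrow> ('a \<times> 'a) set \<Rightarrow> 'a set \<Rightarrow> bool" where
  "non_excessive V E C \<longleftrightarrow> vertex_cover V E C \<and> (\<forall>v\<in>C. \<not> vertex_cover V E (C - {v}))"

text \<open>Hamming distance of the characteristic bit strings = size of symmetric difference.\<close>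
definition hamming :: "'a set \<Rightarrow> 'a set \<Rightarrow> nat" where
  "hamming A B = card ((A - B) \<union> (B - A))"

end

theory Submission
  imports Defs
begin

text \<open>The edge set of G is the union of the two complete bipartite graphs {1,2} x {5,6} and
  {2,4} x {7,8}, and a set covers a complete bipartite graph only if it contains one of its two
  sides. Hence the vertex covers with at most four vertices are {1,2,4} plus at most one further
  vertex, together with {1,2,7,8}, {2,4,5,6} and {5,6,7,8}. All claims about Hamming distances
  are then a finite check over these nine sets.\<close>

lemma covers_complete_bipartite_iff:
  "(\<forall>(u, v) \<in> A \<times> B. u \<in> C \<or> v \<in> C) \<longleftrightarrow> A \<subseteq> C \<or> B \<subseteq> C"
  by blast

lemma superset_card_le_Suc:
  assumes "finite C" "B \<subseteq> C" "card C \<le> Suc (card B)"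
  shows "C = B \<or> (\<exists>x \<in> C - B. C = insert x B)"
proof (cases "C = B")
  case False
  with assms(2) obtain x where x: "x \<in> C - B" by blast
  have "insert x B \<subseteq> C" using x assms(2) by blast
  moreover have "card (insert x B) = Suc (card B)"
    using x assms(1,2) finite_subset by fastforce
  ultimately have "insert x B = C" using card_seteq[OF assms(1)] assms(3) by simp
  then show ?thesis using x by blast
qed simp

lemma G_E_eq: "G_E = {1,2} \<times> {5,6} \<union> {2,4} \<times> {7,8}"
  by (auto simp: G_E_def)

lemma vertex_cover_G_iff:
  "vertex_cover G_V G_E C \<longleftrightarrow>
     C \<subseteq> {1..8} \<and> ({1,2} \<subseteq> C \<or> {5,6} \<subseteq> C) \<and> ({2,4} \<subseteq> C \<or> {7,8} \<subseteq> C)"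
  unfolding vertex_cover_def G_V_def G_E_eq ball_Un covers_complete_bipartite_iff ..

definition G_small_covers :: "nat set set" where
  "G_small_covers = {{1,2,4}, {1,2,3,4}, {1,2,4,5}, {1,2,4,6}, {1,2,4,7}, {1,2,4,8},
     {1,2,7,8}, {2,4,5,6}, {5,6,7,8}}"

lemma k_vertex_cover_4_G_iff: "k_vertex_cover 4 G_V G_E C \<longleftrightarrow> C \<in> G_small_covers"
proof
  assume "k_vertex_cover 4 G_V G_E C"
  then have cover: "C \<subseteq> {1..8}" "{1,2} \<subseteq> C \<or> {5,6} \<subseteq> C" "{2,4} \<subseteq> C \<or> {7,8} \<subseteq> C"
    and card: "card C \<le> 4"
    by (auto simp: k_vertex_cover_def vertex_cover_G_iff)
  have fin: "finite C" using cover(1) finite_subset by blast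
  have eq_if_superset: "C = B" if "B \<subseteq> C" "card B = 4" for B
    using card_seteq[OF fin that(1)] card that(2) by simp
  consider "{1,2,4} \<subseteq> C" | "{1,2,7,8} \<subseteq> C" | "{2,4,5,6} \<subseteq> C" | "{5,6,7,8} \<subseteq> C"
    using cover(2,3) by blast
  then show "C \<in> G_small_covers"
  proof cases
    case 1
    then have "C = {1,2,4} \<or> (\<exists>x \<in> C - {1,2,4}. C = insert x {1,2,4})"
      using superset_card_le_Suc[OF fin] card by simp
    moreover have "C - {1,2,4} \<subseteq> {3,5,6,7,8}" using cover(1) by auto
    ultimately have "C \<in> insert {1,2,4} ((\<lambda>x. insert x {1,2,4}) ` {3,5,6,7,8})"
      by blast
    moreover have "insert {1,2,4} ((\<lambda>x. insert x {1,2,4}) ` {3,5,6,7,8}) \<subseteq> G_small_covers"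
      by (simp add: G_small_covers_def insert_commute)
    ultimately show ?thesis by blast
  qed (simp_all add: G_small_covers_def eq_if_superset)
next
  assume "C \<in> G_small_covers"
  then show "k_vertex_cover 4 G_V G_E C"
    by (auto simp: G_small_covers_def k_vertex_cover_def vertex_cover_G_iff)
qed

theorem lemma3:
  defines "V1 \<equiv> {1,2,7,8::nat}" and "V2 \<equiv> {2,4,5,6::nat}"
      and "V3 \<equiv> {1,2,3,4::nat}" and "V4 \<equiv> {5,6,7,8::nat}"
  shows "(k_vertex_cover 4 G_V G_E V1 \<and> k_vertex_cover 4 G_V G_E V2 \<and>
          k_vertex_cover 4 G_V G_E V3 \<and> k_vertex_cover 4 G_V G_E V4)
    \<and> (non_excessive G_V G_E V1 \<and> non_excessive G_V G_E V2 \<and> non_excessive G_V G_E V4)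
    \<and> hamming V3 V4 = 8
    \<and> (\<forall>A B. k_vertex_cover 4 G_V G_E A \<and> k_vertex_cover 4 G_V G_E B \<longrightarrow> hamming A B \<le> 8)
    \<and> (\<forall>A B. k_vertex_cover 4 G_V G_E A \<and> k_vertex_cover 4 G_V G_E B \<and> hamming A B = 8
            \<longrightarrow> (A = V3 \<and> B = V4) \<or> (A = V4 \<and> B = V3))
    \<and> hamming V1 V2 = 6
    \<and> (\<forall>C. vertex_cover G_V G_E C \<and> card C \<in> {3,4} \<and> C \<noteq> V1 \<longrightarrow> hamming C V2 < 6)
    \<and> (\<forall>C. vertex_cover G_V G_E C \<and> card C \<in> {3,4} \<and> C \<noteq> V2 \<longrightarrow> hamming V1 C < 6)"
proof -
  have small_cover: "C \<in> G_small_covers" if "vertex_cover G_V G_E C" "card C \<in> {3,4}" for C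
    unfolding k_vertex_cover_4_G_iff[symmetric] k_vertex_cover_def using that by auto
  have covers: "V1 \<in> G_small_covers" "V2 \<in> G_small_covers" "V3 \<in> G_small_covers"
    "V4 \<in> G_small_covers"
    by (simp_all add: assms G_small_covers_def)
  have non_excessive: "non_excessive G_V G_E V1" "non_excessive G_V G_E V2"
    "non_excessive G_V G_E V4"
    by (auto simp: assms non_excessive_def vertex_cover_G_iff)
  have maximum: "\<forall>A \<in> G_small_covers. \<forall>B \<in> G_small_covers. hamming A B \<le> 8 \<and>
      (hamming A B = 8 \<longrightarrow> (A = V3 \<and> B = V4) \<or> (A = V4 \<and> B = V3))"
    unfolding assms G_small_covers_def by (simp add: hamming_def insert_Diff_if)
  have local_optimum: "\<forall>C \<in> G_small_covers.
      (card C \<in> {3,4} \<and> C \<noteq> V1 \<longrightarrow> hamming C V2 < 6) \<and>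
      (card C \<in> {3,4} \<and> C \<noteq> V2 \<longrightarrow> hamming V1 C < 6)"
    unfolding assms G_small_covers_def by (simp add: hamming_def insert_Diff_if)
  have "hamming V3 V4 = 8" "hamming V1 V2 = 6"
    by (simp_all add: assms hamming_def)
  then show ?thesis
    unfolding k_vertex_cover_4_G_iff
    using covers non_excessive maximum local_optimum small_cover by blast
qed

end
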